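(* Let $\beta=([0]_\beta,[1]_\beta,[2]_\beta,\dots)$ be a sequence of nonnegative reals with $[0]_\beta=0$, $[1]_\beta=1$ and $[n]_\beta>0$ for $n\ge1$. If the sequence $P_n(x)=\prod_{k=0}^{n-1}(x-[k]_\beta)$ is a $\beta$-binomial sequence, then either $[n]_\beta=n$ for all $n$, or $[n]_\beta=1$ for all $n\ge1$.
   Context: Write $[n]_\beta!=\prod_{i=1}^n[i]_\beta$, $[0]_\beta!=1$. $D_\beta$ is the linear operator on $\mathbb C[x]$ with $D_\beta x^n=[n]_\beta x^{n-1}$; $\exp_\beta(z)=\sum_n z^n/[n]_\beta!$; $E^a_\beta=\exp_\beta(aD_\beta)$; $\Delta_\beta:\mathbb C[x]\to\mathbb C[x]\otimes\mathbb C[x]\cong\mathbb C[x,y]$ is $\Delta_\beta(f)(x,a)=E^a_\beta(f)(x)$, so $\Delta_\beta(x^n)=\sum_{k=0}^n\frac{[n]_\beta!}{[k]_\beta![n-k]_\beta!}x^ky^{n-k}$. A sequence $\{P_n\}$ of monic polynomials with $\deg P_n=n$ and $P_n(0)=0$ for $n\ge1$ is a $\beta$-binomial sequence if $\Delta_\beta(P_n)(x,y)=\sum_{k=0}^n\frac{[n]_\beta!}{[k]_\beta![n-k]_\beta!}P_k(x)P_{n-k}(y)$ for all $n\ge0$; equivalently, the lowering operator $A$ defined by $AP_n=[n]_\beta P_{n-1}$ ($P_{-1}=0$) commutes with $D_\beta$. *)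

theory Defs
  imports "HOL-Computational_Algebra.Polynomial"
begin

definition bfact :: "(nat \<Rightarrow> real) \<Rightarrow> nat \<Rightarrow> complex" where
  "bfact \<beta> n = (\<Prod>i=1..n. complex_of_real (\<beta> i))"

definition bbinom :: "(nat \<Rightarrow> real) \<Rightarrow> nat \<Rightarrow> nat \<Rightarrow> complex" where
  "bbinom \<beta> n k = bfact \<beta> n / (bfact \<beta> k * bfact \<beta> (n - k))"

definition Dbeta :: "(nat \<Rightarrow> real) \<Rightarrow> complex poly \<Rightarrow> complex poly" where
  "Dbeta \<beta> p = (\<Sum>i\<in>{1..degree p}. monom (complex_of_real (\<beta> i) * coeff p i) (i - 1))"

text \<open>Delta_beta(f)(x,a) = E^a_beta(f)(x) = sum_j a^j/[j]_beta! (D_beta^j f)(x);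
  the series terminates since D_beta^j f = 0 for j > deg f.  A bivariate polynomial
  over C is identified with its polynomial function on C x C.\<close>
definition Delta :: "(nat \<Rightarrow> real) \<Rightarrow> complex poly \<Rightarrow> complex \<Rightarrow> complex \<Rightarrow> complex" where
  "Delta \<beta> f x a = (\<Sum>j\<le>degree f. a ^ j / bfact \<beta> j * poly ((Dbeta \<beta> ^^ j) f) x)"

definition is_beta_binomial :: "(nat \<Rightarrow> real) \<Rightarrow> (nat \<Rightarrow> complex poly) \<Rightarrow> bool" where
  "is_beta_binomial \<beta> P \<longleftrightarrow>
     (\<forall>n. lead_coeff (P n) = 1 \<and> degree (P n) = n) \<and>
     (\<forall>n\<ge>1. poly (P n) 0 = 0) \<and>
     (\<forall>n x y. Delta \<beta> (P n) x y =
        (\<Sum>k\<le>n. bbinom \<beta> n k * poly (P k) x * poly (P (n - k)) y))"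

end

theory Submission
  imports Defs
begin

text \<open>Write \<open>U\<^sub>j = [0] + ... + [j]\<close>. Comparing the coefficients of \<open>x y\<^sup>j\<close> on both sides
  of the binomial identity for \<open>P\<^bsub>j+2\<^esub>\<close>, where only \<open>k = 1, 2\<close> contribute because \<open>[0] = 0\<close>,
  gives the recurrence \<open>[j+1] (U\<^sub>j + [j+1]) = [j+2] (U\<^sub>j + [j+1] / [2])\<close>, which determines the
  whole sequence from \<open>[2]\<close>. The coefficient of \<open>x y\<close> for \<open>P\<^sub>4\<close>, together with the recurrence
  for \<open>j = 1, 2\<close>, forces \<open>([2] - 1)\<^sup>2 ([2] - 2) = 0\<close>; the sequences \<open>[n] = 1\<close> and \<open>[n] = n\<close>
  satisfy the recurrence with \<open>[2] = 1\<close> and \<open>[2] = 2\<close> respectively.\<close>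

lemma coeff_Dbeta: "coeff (Dbeta \<beta> p) i = complex_of_real (\<beta> (Suc i)) * coeff p (Suc i)"
proof -
  have "coeff (Dbeta \<beta> p) i =
      (\<Sum>k\<in>{1..degree p}. if k = Suc i then complex_of_real (\<beta> k) * coeff p k else 0)"
    unfolding Dbeta_def coeff_sum coeff_monom by (rule sum.cong) auto
  then show ?thesis
    by (auto simp: coeff_eq_0)
qed

lemma bfact_0 [simp]: "bfact \<beta> 0 = 1"
  by (simp add: bfact_def)

lemma bfact_Suc: "bfact \<beta> (Suc n) = bfact \<beta> n * complex_of_real (\<beta> (Suc n))"
  by (simp add: bfact_def prod.nat_ivl_Suc' mult.commute)

lemma bfact_nonzero:
  assumes "\<forall>n\<ge>1. \<beta> n > 0"
  shows "bfact \<beta> n \<noteq> 0"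
proof (induction n)
  case (Suc n)
  then show ?case
    using assms by (simp add: bfact_Suc less_imp_neq[symmetric])
qed simp

lemma coeff_Dbeta_funpow:
  "bfact \<beta> i * coeff ((Dbeta \<beta> ^^ j) p) i = bfact \<beta> (i + j) * coeff p (i + j)"
proof (induction j arbitrary: i)
  case (Suc j)
  have "bfact \<beta> i * coeff ((Dbeta \<beta> ^^ Suc j) p) i
      = bfact \<beta> (Suc i) * coeff ((Dbeta \<beta> ^^ j) p) (Suc i)"
    by (simp add: coeff_Dbeta bfact_Suc)
  also have "\<dots> = bfact \<beta> (i + Suc j) * coeff p (i + Suc j)"
    using Suc.IH[of "Suc i"] by simp
  finally show ?case .
qed simp

lemma coeff_eq_if_poly_bilinear_eq:
  fixes p q r s :: "'i \<Rightarrow> 'a::{comm_ring_1,ring_no_zero_divisors,ring_char_0} poly"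
  assumes "\<And>x y. (\<Sum>j\<in>J. poly (p j) x * poly (q j) y) = (\<Sum>k\<in>K. poly (r k) x * poly (s k) y)"
  shows "(\<Sum>j\<in>J. coeff (p j) i * coeff (q j) m) = (\<Sum>k\<in>K. coeff (r k) i * coeff (s k) m)"
proof -
  have eq: "(\<Sum>j\<in>J. smult (poly (q j) y) (p j)) = (\<Sum>k\<in>K. smult (poly (s k) y) (r k))" for y
    using assms[of _ y] by (simp add: poly_eq_poly_eq_iff[symmetric] fun_eq_iff poly_sum mult.commute)
  have "poly (\<Sum>j\<in>J. smult (coeff (p j) i) (q j)) y = poly (\<Sum>k\<in>K. smult (coeff (r k) i) (s k)) y"
    for y
    using arg_cong[where f = "\<lambda>p. coeff p i", OF eq[of y]] by (simp add: coeff_sum poly_sum mult.commute)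
  then have "(\<Sum>j\<in>J. smult (coeff (p j) i) (q j)) = (\<Sum>k\<in>K. smult (coeff (r k) i) (s k))"
    by (simp add: poly_eq_poly_eq_iff[symmetric] fun_eq_iff)
  from arg_cong[where f = "\<lambda>p. coeff p m", OF this] show ?thesis
    by (simp add: coeff_sum)
qed

lemma beta_binomial_coeff:
  assumes "is_beta_binomial \<beta> P" and "m \<le> n"
  shows "coeff ((Dbeta \<beta> ^^ m) (P n)) i / bfact \<beta> m
       = (\<Sum>k\<le>n. bbinom \<beta> n k * coeff (P k) i * coeff (P (n - k)) m)"
proof -
  have "degree (P n) = n" and binom:
    "Delta \<beta> (P n) x y = (\<Sum>k\<le>n. bbinom \<beta> n k * poly (P k) x * poly (P (n - k)) y)" for x y
    using assms(1) unfolding is_beta_binomial_def by blast+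
  then have "(\<Sum>j\<le>n. poly ((Dbeta \<beta> ^^ j) (P n)) x * poly (monom (1 / bfact \<beta> j) j) y)
      = (\<Sum>k\<le>n. poly (smult (bbinom \<beta> n k) (P k)) x * poly (P (n - k)) y)" for x y
    unfolding Delta_def by (simp add: poly_monom mult_ac)
  from coeff_eq_if_poly_bilinear_eq[OF this, of i m] show ?thesis
    using assms(2) by (simp add: coeff_monom mult.assoc if_distrib[where f = "times _"] cong: if_cong)
qed

definition falling_poly :: "(nat \<Rightarrow> 'a::comm_ring_1) \<Rightarrow> nat \<Rightarrow> 'a poly" where
  "falling_poly a n = (\<Prod>k<n. [:- a k, 1:])"

lemma falling_poly_0 [simp]: "falling_poly a 0 = 1"
  by (simp add: falling_poly_def)

lemma falling_poly_Suc: "falling_poly a (Suc n) = falling_poly a n * [:- a n, 1:]"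
  by (simp add: falling_poly_def)

lemma coeff_falling_poly_Suc:
  "coeff (falling_poly a (Suc n)) (Suc i) = coeff (falling_poly a n) i - a n * coeff (falling_poly a n) (Suc i)"
  by (simp add: falling_poly_Suc)

lemma coeff_falling_poly_above: "n < i \<Longrightarrow> coeff (falling_poly a n) i = 0"
proof (induction n arbitrary: i)
  case (Suc n)
  then obtain i' where "i = Suc i'"
    by (cases i) auto
  with Suc show ?case
    by (simp add: coeff_falling_poly_Suc)
qed (simp add: coeff_1)

lemma coeff_falling_poly_top [simp]: "coeff (falling_poly a n) n = 1"
  by (induction n) (simp_all add: coeff_falling_poly_Suc coeff_falling_poly_above)

lemma coeff_falling_poly_0: "coeff (falling_poly a n) 0 = (\<Prod>k<n. - a k)"
  by (induction n) (simp_all add: falling_poly_Suc)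

lemma coeff_falling_poly_subtop: "coeff (falling_poly a (Suc n)) n = - (\<Sum>k\<le>n. a k)"
  by (induction n) (simp_all add: coeff_falling_poly_Suc coeff_falling_poly_0)

lemma coeff_falling_poly_1:
  assumes "a 0 = 0"
  shows "coeff (falling_poly a (Suc n)) 1 = (\<Prod>k=1..n. - a k)"
proof (induction n)
  case 0
  then show ?case
    using assms by (simp add: falling_poly_Suc)
next
  case (Suc n)
  have "coeff (falling_poly a (Suc n)) 0 = 0"
    unfolding coeff_falling_poly_0 using assms by (intro prod_zero) auto
  with Suc show ?case
    by (simp add: coeff_falling_poly_Suc prod.nat_ivl_Suc')
qed

definition beta_recurrence :: "(nat \<Rightarrow> real) \<Rightarrow> bool" where
  "beta_recurrence \<beta> \<longleftrightarrow> (\<forall>j\<ge>1.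
     \<beta> (Suc j) * ((\<Sum>i\<le>j. \<beta> i) + \<beta> (Suc j)) = \<beta> (Suc (Suc j)) * ((\<Sum>i\<le>j. \<beta> i) + \<beta> (Suc j) / \<beta> 2))"

lemma beta_recurrence_if_falling_beta_binomial:
  fixes \<beta> :: "nat \<Rightarrow> real"
  defines "P \<equiv> falling_poly (\<lambda>k. complex_of_real (\<beta> k))"
  assumes b0: "\<beta> 0 = 0" and b1: "\<beta> 1 = 1" and pos: "\<forall>n\<ge>1. \<beta> n > 0"
    and bin: "is_beta_binomial \<beta> P"
  shows "beta_recurrence \<beta>"
  unfolding beta_recurrence_def
proof (intro allI impI)
  fix j :: nat
  assume "j \<ge> 1"
  let ?b = "\<lambda>i. complex_of_real (\<beta> i)"
  let ?U = "\<Sum>i\<le>j. \<beta> i"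
  define f where
    "f k = bbinom \<beta> (Suc (Suc j)) k * coeff (P k) 1 * coeff (P (Suc (Suc j) - k)) j" for k
  have nz: "bfact \<beta> n \<noteq> 0" for n
    using bfact_nonzero[OF pos] .
  have b_Suc: "\<beta> (Suc n) \<noteq> 0" for n
    using pos[rule_format, of "Suc n"] by simp
  have bfact_1: "bfact \<beta> 1 = 1"
    using b1 by (simp add: bfact_def)
  have "coeff ((Dbeta \<beta> ^^ j) (P (Suc (Suc j)))) 1 / bfact \<beta> j
      = ?b (Suc j) * coeff (P (Suc (Suc j))) (Suc j)"
    using coeff_Dbeta_funpow[of \<beta> 1 j] bfact_1 nz[of j] by (simp add: bfact_Suc)
  also have "\<dots> = - ?b (Suc j) * (of_real ?U + ?b (Suc j))"
    by (simp add: P_def coeff_falling_poly_subtop algebra_simps)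
  finally have lhs: "coeff ((Dbeta \<beta> ^^ j) (P (Suc (Suc j)))) 1 / bfact \<beta> j
      = - ?b (Suc j) * (of_real ?U + ?b (Suc j))" .
  have "(\<Sum>k\<le>Suc (Suc j). f k) = (\<Sum>k\<in>{1,2}. f k)"
  proof (rule sum.mono_neutral_right)
    show "\<forall>k\<in>{..Suc (Suc j)} - {1, 2}. f k = 0"
    proof
      fix k
      assume "k \<in> {..Suc (Suc j)} - {1, 2}"
      then have "k = 0 \<or> Suc (Suc j) - k < j"
        by auto
      then show "f k = 0"
        by (auto simp: f_def P_def coeff_1 coeff_falling_poly_above)
    qed
  qed auto
  also have "\<dots> = - ?b (Suc (Suc j)) * of_real ?U - ?b (Suc (Suc j)) * ?b (Suc j) / ?b 2"
    using nz[of j] b0 b1 b_Suc[of j] b_Suc[of 1]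
    by (simp add: f_def bbinom_def P_def bfact_Suc coeff_falling_poly_1 coeff_falling_poly_subtop
        numeral_2_eq_2 field_simps)
  finally have "- ?b (Suc j) * (of_real ?U + ?b (Suc j))
      = - ?b (Suc (Suc j)) * of_real ?U - ?b (Suc (Suc j)) * ?b (Suc j) / ?b 2"
    using beta_binomial_coeff[OF bin, of j "Suc (Suc j)" 1] lhs by (simp add: f_def)
  then have "complex_of_real (\<beta> (Suc j) * (?U + \<beta> (Suc j)))
      = complex_of_real (\<beta> (Suc (Suc j)) * (?U + \<beta> (Suc j) / \<beta> 2))"
    by (simp add: algebra_simps)
  then show "\<beta> (Suc j) * (?U + \<beta> (Suc j)) = \<beta> (Suc (Suc j)) * (?U + \<beta> (Suc j) / \<beta> 2)"
    by (simp only: of_real_eq_iff)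
qed

lemma falling_beta_binomial_mixed_coeff_4:
  fixes \<beta> :: "nat \<Rightarrow> real"
  defines "P \<equiv> falling_poly (\<lambda>k. complex_of_real (\<beta> k))"
  assumes b0: "\<beta> 0 = 0" and b1: "\<beta> 1 = 1" and pos: "\<forall>n\<ge>1. \<beta> n > 0"
    and bin: "is_beta_binomial \<beta> P"
  shows "\<beta> 2 * (\<beta> 2 + \<beta> 3 * (1 + \<beta> 2)) = 2 * \<beta> 4 * \<beta> 2 + \<beta> 4 * \<beta> 3 / \<beta> 2"
proof -
  have "\<beta> 2 > 0" "\<beta> 3 > 0" "\<beta> 4 > 0"
    using pos by auto
  moreover have "complex_of_real (\<beta> 2) * coeff (P 4) 2
      = (\<Sum>k\<le>4. bbinom \<beta> 4 k * coeff (P k) 1 * coeff (P (4 - k)) 1)"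
    using beta_binomial_coeff[OF bin, of 1 4 1] b1 by (simp add: bfact_def coeff_Dbeta numeral_2_eq_2)
  ultimately have "complex_of_real (\<beta> 2 * (\<beta> 2 + \<beta> 3 * (1 + \<beta> 2)))
      = complex_of_real (2 * \<beta> 4 * \<beta> 2 + \<beta> 4 * \<beta> 3 / \<beta> 2)"
    unfolding bbinom_def
    using b0 b1 by (simp add: P_def numeral_eq_Suc falling_poly_Suc bfact_Suc atMost_Suc coeff_1 field_simps)
  then show ?thesis
    by (simp only: of_real_eq_iff)
qed

lemma positive_solution_of_beta_system:
  fixes x y z :: real
  assumes x: "x > 0"
    and e1: "x * (1 + x) = 2 * y"
    and e2: "y * (1 + x + y) = z * (1 + x + y / x)"
    and e3: "x * (x + y * (1 + x)) = 2 * z * x + z * y / x"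
  shows "x = 1 \<or> x = 2"
proof -
  have y: "y = x * (1 + x) / 2"
    using e1 by simp
  have "(1 + x) * (6 * z - x * (1 + x) * (2 + x)) * x = 0"
    using e2 x unfolding y by (simp add: field_simps)
  then have z: "z = x * (1 + x) * (2 + x) / 6"
    using x by (simp add: add_pos_pos)
  have "x * (x + y * (1 + x)) * x = 2 * z * x * x + z * y"
    using e3 x by (simp add: field_simps)
  then have "x^2 * ((x - 1)^2 * (x - 2)) = 0"
    unfolding y z by (simp add: field_simps power2_eq_square)
  then have "(x - 1)^2 * (x - 2) = 0"
    using x by simp
  then show ?thesis
    by auto
qed

lemma falling_beta_binomial_beta_2:
  fixes \<beta> :: "nat \<Rightarrow> real"
  assumes b0: "\<beta> 0 = 0" and b1: "\<beta> 1 = 1" and pos: "\<forall>n\<ge>1. \<beta> n > 0"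
    and bin: "is_beta_binomial \<beta> (falling_poly (\<lambda>k. complex_of_real (\<beta> k)))"
  shows "\<beta> 2 = 1 \<or> \<beta> 2 = 2"
proof -
  have rec: "beta_recurrence \<beta>"
    using beta_recurrence_if_falling_beta_binomial[OF b0 b1 pos bin] .
  have "\<beta> 2 > 0"
    using pos by simp
  moreover have "\<beta> 2 * (1 + \<beta> 2) = 2 * \<beta> 3"
    using rec[unfolded beta_recurrence_def, rule_format, of 1] b0 b1 \<open>\<beta> 2 > 0\<close>
    by (simp add: numeral_2_eq_2 numeral_3_eq_3)
  moreover have "\<beta> 3 * (1 + \<beta> 2 + \<beta> 3) = \<beta> 4 * (1 + \<beta> 2 + \<beta> 3 / \<beta> 2)"
    using rec[unfolded beta_recurrence_def, rule_format, of 2] b0 b1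
    by (simp add: numeral_eq_Suc)
  ultimately show ?thesis
    using positive_solution_of_beta_system falling_beta_binomial_mixed_coeff_4[OF b0 b1 pos bin]
    by blast
qed

lemma beta_recurrence_unique:
  fixes \<alpha> \<beta> :: "nat \<Rightarrow> real"
  assumes "beta_recurrence \<alpha>" "beta_recurrence \<beta>"
    and "\<forall>n\<ge>1. \<alpha> n > 0" "\<forall>n\<ge>1. \<beta> n > 0"
    and "\<alpha> 0 = 0" "\<beta> 0 = 0" "\<alpha> 1 = \<beta> 1" "\<alpha> 2 = \<beta> 2"
  shows "\<alpha> = \<beta>"
proof
  fix n
  show "\<alpha> n = \<beta> n"
  proof (induction n rule: less_induct)
    case (less n)
    consider "n \<le> 2" | j where "n = Suc (Suc j)" "j \<ge> 1"
      by (metis Suc_1 Suc_le_D not_less_eq_eq)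
    then show ?case
    proof cases
      case 1
      then show ?thesis
        using assms(5-8) by (auto simp: le_Suc_eq numeral_2_eq_2)
    next
      case 2
      let ?U = "\<Sum>i\<le>j. \<alpha> i"
      have same_below: "\<alpha> (Suc j) = \<beta> (Suc j)" "?U = (\<Sum>i\<le>j. \<beta> i)"
        using less 2 by auto
      have "0 \<le> ?U"
        using assms(3,5) by (intro sum_nonneg) (metis less_imp_le less_one not_le order.refl)
      moreover have "0 < \<alpha> (Suc j) / \<alpha> 2"
        using assms(3) by simp
      ultimately have "?U + \<alpha> (Suc j) / \<alpha> 2 \<noteq> 0"
        by linarith
      moreover have "\<alpha> (Suc (Suc j)) * (?U + \<alpha> (Suc j) / \<alpha> 2)
          = \<beta> (Suc (Suc j)) * (?U + \<alpha> (Suc j) / \<alpha> 2)"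
        using assms(1,2) 2 same_below assms(8) unfolding beta_recurrence_def by metis
      ultimately show ?thesis
        using 2 by simp
    qed
  qed
qed

lemma beta_recurrence_of_nat: "beta_recurrence real"
proof -
  have "(\<Sum>i\<le>j. real i) = real j * (real j + 1) / 2" for j
    using double_gauss_sum[of j, where 'a = real] by (simp add: atLeast0AtMost)
  then show ?thesis
    unfolding beta_recurrence_def by (simp add: field_simps)
qed

lemma beta_recurrence_one: "beta_recurrence (\<lambda>n. if n = 0 then 0 else 1)"
proof -
  have "(\<Sum>i\<le>j. if i = 0 then 0 else 1) = real j" for j
    by (induction j) auto
  then show ?thesis
    unfolding beta_recurrence_def by simp
qed

theorem lemma5p6:
  fixes \<beta> :: "nat \<Rightarrow> real"
  assumes "\<forall>n. \<beta> n \<ge> 0"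
    and "\<beta> 0 = 0" and "\<beta> 1 = 1"
    and "\<forall>n\<ge>1. \<beta> n > 0"
    and "is_beta_binomial \<beta> (\<lambda>n. \<Prod>k<n. [:- complex_of_real (\<beta> k), 1:])"
  shows "(\<forall>n. \<beta> n = real n) \<or> (\<forall>n\<ge>1. \<beta> n = 1)"
proof -
  have bin: "is_beta_binomial \<beta> (falling_poly (\<lambda>k. complex_of_real (\<beta> k)))"
    using assms(5) unfolding falling_poly_def .
  have rec: "beta_recurrence \<beta>"
    using beta_recurrence_if_falling_beta_binomial[OF assms(2-4) bin] .
  have "\<beta> 2 = 1 \<or> \<beta> 2 = 2"
    using falling_beta_binomial_beta_2[OF assms(2-4) bin] .
  then show ?thesis
  proof
    assume "\<beta> 2 = 1"
    with assms(2-4) have "\<beta> = (\<lambda>n. if n = 0 then 0 else 1)"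
      by (intro beta_recurrence_unique[OF rec beta_recurrence_one]) auto
    then show ?thesis
      by simp
  next
    assume "\<beta> 2 = 2"
    with assms(2-4) have "\<beta> = real"
      by (intro beta_recurrence_unique[OF rec beta_recurrence_of_nat]) auto
    then show ?thesis
      by simp
  qed
qed

end
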